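(* Let $G$ be a finite simple chordal graph. The following are equivalent: (i) $\gamma(G)=\alpha(G)$; (ii) $G$ is well-covered; (iii) $G$ is well-dominated; (iv) $V(G)$ is the disjoint union of maximal cliques of $G$ each of which contains a free vertex.
   Context: A dominating set of $G$ is a set $D\subseteq V(G)$ such that every vertex lies in $D$ or is adjacent to a vertex of $D$; $\gamma(G)$ is the minimum size of a dominating set, and $G$ is well-dominated if all minimal (under inclusion) dominating sets have the same size. $\alpha(G)$ is the maximum size of an independent set; $G$ is well-covered if all maximal independent sets have the same size. A clique is a set of pairwise adjacent vertices; a free vertex is a vertex belonging to exactly one maximal clique. A graph is chordal if every cycle of length at least $4$ has a chord. *)

theory Defs
  imports Main
begin

definition simple_graph :: "'a set \<Rightarrow> ('a \<Rightarrow> 'a \<Rightarrow> bool) \<Rightarrow> bool" where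
  "simple_graph V E \<longleftrightarrow> finite V \<and> (\<forall>u v. E u v \<longrightarrow> u \<in> V \<and> v \<in> V)
     \<and> (\<forall>u v. E u v \<longrightarrow> E v u) \<and> (\<forall>v. \<not> E v v)"

definition dominating_set :: "'a set \<Rightarrow> ('a \<Rightarrow> 'a \<Rightarrow> bool) \<Rightarrow> 'a set \<Rightarrow> bool" where
  "dominating_set V E D \<longleftrightarrow> D \<subseteq> V \<and> (\<forall>v\<in>V. v \<in> D \<or> (\<exists>u\<in>D. E v u))"

definition minimal_dominating_set :: "'a set \<Rightarrow> ('a \<Rightarrow> 'a \<Rightarrow> bool) \<Rightarrow> 'a set \<Rightarrow> bool" where
  "minimal_dominating_set V E D \<longleftrightarrow> dominating_set V E D
     \<and> (\<forall>D'. D' \<subset> D \<longrightarrow> \<not> dominating_set V E D')"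

definition domination_number :: "'a set \<Rightarrow> ('a \<Rightarrow> 'a \<Rightarrow> bool) \<Rightarrow> nat" where
  "domination_number V E = Min (card ` {D. dominating_set V E D})"

definition well_dominated :: "'a set \<Rightarrow> ('a \<Rightarrow> 'a \<Rightarrow> bool) \<Rightarrow> bool" where
  "well_dominated V E \<longleftrightarrow> (\<forall>D1 D2. minimal_dominating_set V E D1 \<longrightarrow>
      minimal_dominating_set V E D2 \<longrightarrow> card D1 = card D2)"

definition independent_set :: "'a set \<Rightarrow> ('a \<Rightarrow> 'a \<Rightarrow> bool) \<Rightarrow> 'a set \<Rightarrow> bool" where
  "independent_set V E S \<longleftrightarrow> S \<subseteq> V \<and> (\<forall>u\<in>S. \<forall>v\<in>S. \<not> E u v)"

definition maximal_independent_set :: "'a set \<Rightarrow> ('a \<Rightarrow> 'a \<Rightarrow> bool) \<Rightarrow> 'a set \<Rightarrow> bool" where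
  "maximal_independent_set V E S \<longleftrightarrow> independent_set V E S
     \<and> (\<forall>S'. S \<subset> S' \<longrightarrow> \<not> independent_set V E S')"

definition independence_number :: "'a set \<Rightarrow> ('a \<Rightarrow> 'a \<Rightarrow> bool) \<Rightarrow> nat" where
  "independence_number V E = Max (card ` {S. independent_set V E S})"

definition well_covered :: "'a set \<Rightarrow> ('a \<Rightarrow> 'a \<Rightarrow> bool) \<Rightarrow> bool" where
  "well_covered V E \<longleftrightarrow> (\<forall>S1 S2. maximal_independent_set V E S1 \<longrightarrow>
      maximal_independent_set V E S2 \<longrightarrow> card S1 = card S2)"

definition clique :: "'a set \<Rightarrow> ('a \<Rightarrow> 'a \<Rightarrow> bool) \<Rightarrow> 'a set \<Rightarrow> bool" where
  "clique V E K \<longleftrightarrow> K \<subseteq> V \<and> (\<forall>u\<in>K. \<forall>v\<in>K. u \<noteq> v \<longrightarrow> E u v)"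

definition maximal_clique :: "'a set \<Rightarrow> ('a \<Rightarrow> 'a \<Rightarrow> bool) \<Rightarrow> 'a set \<Rightarrow> bool" where
  "maximal_clique V E K \<longleftrightarrow> clique V E K \<and> (\<forall>K'. K \<subset> K' \<longrightarrow> \<not> clique V E K')"

definition free_vertex :: "'a set \<Rightarrow> ('a \<Rightarrow> 'a \<Rightarrow> bool) \<Rightarrow> 'a \<Rightarrow> bool" where
  "free_vertex V E v \<longleftrightarrow> v \<in> V \<and> (\<exists>!K. maximal_clique V E K \<and> v \<in> K)"

definition is_cycle :: "'a set \<Rightarrow> ('a \<Rightarrow> 'a \<Rightarrow> bool) \<Rightarrow> 'a list \<Rightarrow> bool" where
  "is_cycle V E cs \<longleftrightarrow> length cs \<ge> 3 \<and> distinct cs \<and> set cs \<subseteq> V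
     \<and> (\<forall>i < length cs. E (cs ! i) (cs ! ((i + 1) mod length cs)))"

definition has_chord :: "('a \<Rightarrow> 'a \<Rightarrow> bool) \<Rightarrow> 'a list \<Rightarrow> bool" where
  "has_chord E cs \<longleftrightarrow> (\<exists>i < length cs. \<exists>j < length cs.
      j \<noteq> (i + 1) mod length cs \<and> i \<noteq> (j + 1) mod length cs \<and> i \<noteq> j
      \<and> E (cs ! i) (cs ! j))"

definition chordal :: "'a set \<Rightarrow> ('a \<Rightarrow> 'a \<Rightarrow> bool) \<Rightarrow> bool" where
  "chordal V E \<longleftrightarrow> (\<forall>cs. is_cycle V E cs \<and> length cs \<ge> 4 \<longrightarrow> has_chord E cs)"

end

theory Submission
  imports Defs
begin

text \<open>Maximal independent sets are minimal dominating sets, and every maximal independent set S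
  satisfies \<gamma>(G) \<le> |S| \<le> \<alpha>(G); so (i) and (iii) each imply (ii).

  Call a clique K with a vertex whose whole neighbourhood lies in K a simplex; the maximal cliques
  with a free vertex are exactly the simplices. If V is partitioned into simplices, every
  dominating set meets every simplex, while independent sets, and by minimality also minimal
  dominating sets, meet each simplex at most once. Hence \<gamma>(G), \<alpha>(G) and the size of every minimal
  dominating set all equal the number of simplices, so (iv) implies (i) and (iii).

  For (ii) \<Longrightarrow> (iv), removing closed neighbourhoods of simplicial vertices (Dirac's lemma) partitions
  a chordal graph into cliques \<P> together with an independent set of size |\<P>|, so in the
  well-covered case all maximal independent sets have size |\<P>|. If every vertex of a block P had a
  neighbour outside P, chordality would give an independent set outside P dominating P; extended
  to a maximal independent set it avoids P and so has fewer than |\<P>| elements. Thus every block is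
  a simplex.\<close>

lemma simple_graph_symp: "simple_graph V E \<Longrightarrow> symp E"
  unfolding simple_graph_def symp_def by blast

lemma simple_graph_sym: "simple_graph V E \<Longrightarrow> E u v \<Longrightarrow> E v u"
  unfolding simple_graph_def by blast

lemma simple_graph_irrefl: "simple_graph V E \<Longrightarrow> \<not> E v v"
  unfolding simple_graph_def by blast

lemma simple_graph_edge_in: "simple_graph V E \<Longrightarrow> E u v \<Longrightarrow> u \<in> V \<and> v \<in> V"
  unfolding simple_graph_def by blast

lemma simple_graph_finite: "simple_graph V E \<Longrightarrow> finite V"
  unfolding simple_graph_def by blast

definition induced :: "'a set \<Rightarrow> ('a \<Rightarrow> 'a \<Rightarrow> bool) \<Rightarrow> 'a \<Rightarrow> 'a \<Rightarrow> bool" where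
  "induced W E = (\<lambda>x y. E x y \<and> x \<in> W \<and> y \<in> W)"

lemma simple_graph_induced: "simple_graph V E \<Longrightarrow> W \<subseteq> V \<Longrightarrow> simple_graph W (induced W E)"
  using finite_subset unfolding simple_graph_def induced_def by blast

lemma chordal_induced:
  assumes "chordal V E" "W \<subseteq> V"
  shows "chordal W (induced W E)"
  unfolding chordal_def
proof (intro allI impI)
  fix cs assume cs: "is_cycle W (induced W E) cs \<and> 4 \<le> length cs"
  then have "is_cycle V E cs" using assms(2) unfolding is_cycle_def induced_def by auto
  then have "has_chord E cs" using cs assms(1) unfolding chordal_def by blast
  moreover have "set cs \<subseteq> W" using cs unfolding is_cycle_def by auto
  ultimately show "has_chord (induced W E) cs"
    unfolding has_chord_def induced_def by (metis nth_mem subsetD)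
qed

lemma clique_induced: "clique W (induced W E) K \<Longrightarrow> W \<subseteq> V \<Longrightarrow> clique V E K"
  unfolding clique_def induced_def by blast

lemma independent_set_induced:
  "independent_set W (induced W E) S \<Longrightarrow> W \<subseteq> V \<Longrightarrow> independent_set V E S"
  unfolding independent_set_def induced_def by blast

section \<open>Domination and independence\<close>

lemma finite_dominating_sets: "finite V \<Longrightarrow> finite {D. dominating_set V E D}"
  using finite_subset[of _ "Pow V"] unfolding dominating_set_def by auto

lemma finite_independent_sets: "finite V \<Longrightarrow> finite {S. independent_set V E S}"
  using finite_subset[of _ "Pow V"] unfolding independent_set_def by auto

lemma domination_number_le: "finite V \<Longrightarrow> dominating_set V E D \<Longrightarrow> domination_number V E \<le> card D"
  unfolding domination_number_def by (simp add: finite_dominating_sets)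

lemma domination_number_eqI:
  assumes "finite V" "dominating_set V E D" "\<And>D'. dominating_set V E D' \<Longrightarrow> card D \<le> card D'"
  shows "domination_number V E = card D"
  unfolding domination_number_def using assms by (intro Min_eqI) (auto simp: finite_dominating_sets)

lemma independence_number_ge: "finite V \<Longrightarrow> independent_set V E S \<Longrightarrow> card S \<le> independence_number V E"
  unfolding independence_number_def by (simp add: finite_independent_sets)

lemma independence_number_eqI:
  assumes "finite V" "independent_set V E S" "\<And>S'. independent_set V E S' \<Longrightarrow> card S' \<le> card S"
  shows "independence_number V E = card S"
  unfolding independence_number_def using assms
  by (intro Max_eqI) (auto simp: finite_independent_sets)

lemma independent_set_insert:
  assumes "simple_graph V E" "independent_set V E S" "v \<in> V" "\<forall>s\<in>S. \<not> E v s"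
  shows "independent_set V E (insert v S)"
  using assms simple_graph_sym[OF assms(1)] simple_graph_irrefl[OF assms(1)]
  unfolding independent_set_def by blast

lemma independent_set_extend:
  assumes "finite V" "independent_set V E A"
  shows "\<exists>S. maximal_independent_set V E S \<and> A \<subseteq> S"
proof -
  obtain S where "independent_set V E S" "A \<subseteq> S" "\<forall>T. independent_set V E T \<longrightarrow> S \<subseteq> T \<longrightarrow> S = T"
    using finite_has_maximal2[OF finite_independent_sets[OF assms(1), of E], of A] assms(2) by auto
  then show ?thesis unfolding maximal_independent_set_def by blast
qed

lemma clique_extend:
  assumes "finite V" "clique V E A"
  shows "\<exists>K. maximal_clique V E K \<and> A \<subseteq> K"
proof -
  have "finite {K. clique V E K}"
    using finite_subset[of _ "Pow V"] assms(1) unfolding clique_def by auto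
  then obtain K where "clique V E K" "A \<subseteq> K" "\<forall>T. clique V E T \<longrightarrow> K \<subseteq> T \<longrightarrow> K = T"
    using finite_has_maximal2[of "{K. clique V E K}" A] assms(2) by auto
  then show ?thesis unfolding maximal_clique_def by blast
qed

lemma maximal_independent_set_dominating:
  assumes sg: "simple_graph V E" and S: "maximal_independent_set V E S"
  shows "dominating_set V E S"
  unfolding dominating_set_def
proof (intro conjI ballI)
  have indep: "independent_set V E S" using S unfolding maximal_independent_set_def by blast
  then show "S \<subseteq> V" unfolding independent_set_def by blast
  fix v assume "v \<in> V"
  show "v \<in> S \<or> (\<exists>u\<in>S. E v u)"
  proof (rule ccontr)
    assume "\<not> (v \<in> S \<or> (\<exists>u\<in>S. E v u))"
    then have "independent_set V E (insert v S)" "S \<subset> insert v S"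
      using independent_set_insert[OF sg indep \<open>v \<in> V\<close>] by auto
    then show False using S unfolding maximal_independent_set_def by blast
  qed
qed

lemma maximal_independent_set_minimal_dominating:
  assumes sg: "simple_graph V E" and S: "maximal_independent_set V E S"
  shows "minimal_dominating_set V E S"
  unfolding minimal_dominating_set_def
proof (intro conjI allI impI notI)
  show "dominating_set V E S" using maximal_independent_set_dominating[OF sg S] .
  have indep: "independent_set V E S" using S unfolding maximal_independent_set_def by blast
  fix D assume D: "D \<subset> S" "dominating_set V E D"
  obtain x where x: "x \<in> S" "x \<notin> D" using D(1) by blast
  then have "x \<in> V" using indep unfolding independent_set_def by blast
  then obtain u where "u \<in> D" "E x u" using D(2) x(2) unfolding dominating_set_def by blast
  then show False using D(1) x(1) indep unfolding independent_set_def by blast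
qed

lemma well_dominated_imp_well_covered:
  assumes sg: "simple_graph V E" and "well_dominated V E"
  shows "well_covered V E"
  unfolding well_covered_def
proof (intro allI impI)
  fix S1 S2 assume "maximal_independent_set V E S1" "maximal_independent_set V E S2"
  then have "minimal_dominating_set V E S1" "minimal_dominating_set V E S2"
    using maximal_independent_set_minimal_dominating[OF sg] by blast+
  then show "card S1 = card S2" using \<open>well_dominated V E\<close> unfolding well_dominated_def by blast
qed

lemma domination_eq_independence_imp_well_covered:
  assumes sg: "simple_graph V E" and eq: "domination_number V E = independence_number V E"
  shows "well_covered V E"
  unfolding well_covered_def
proof (intro allI impI)
  have bounds: "domination_number V E \<le> card S" "card S \<le> independence_number V E"
    if S: "maximal_independent_set V E S" for S
  proof -
    show "domination_number V E \<le> card S"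
      using domination_number_le[OF simple_graph_finite[OF sg]]
        maximal_independent_set_dominating[OF sg S] .
    show "card S \<le> independence_number V E"
      using S independence_number_ge[OF simple_graph_finite[OF sg]]
      unfolding maximal_independent_set_def by blast
  qed
  fix S1 S2 assume "maximal_independent_set V E S1" "maximal_independent_set V E S2"
  from bounds[OF this(1)] bounds[OF this(2)] show "card S1 = card S2" using eq by linarith
qed

section \<open>Partitions into cliques and simplices\<close>

definition clique_partition :: "'a set \<Rightarrow> ('a \<Rightarrow> 'a \<Rightarrow> bool) \<Rightarrow> 'a set set \<Rightarrow> bool" where
  "clique_partition V E \<P> \<longleftrightarrow> (\<forall>P\<in>\<P>. clique V E P)
     \<and> (\<forall>P1\<in>\<P>. \<forall>P2\<in>\<P>. P1 \<noteq> P2 \<longrightarrow> P1 \<inter> P2 = {}) \<and> \<Union>\<P> = V"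

lemma clique_partition_finite: "finite V \<Longrightarrow> clique_partition V E \<P> \<Longrightarrow> finite \<P>"
  using finite_subset[of \<P> "Pow V"] unfolding clique_partition_def by auto

lemma clique_partition_insert:
  assumes \<P>: "clique_partition (V - K) (induced (V - K) E) \<P>" and K: "clique V E K"
  shows "clique_partition V E (insert K \<P>)"
  unfolding clique_partition_def
proof (intro conjI)
  have cover: "\<Union>\<P> = V - K" using \<P> unfolding clique_partition_def by blast
  show "\<forall>P\<in>insert K \<P>. clique V E P"
    using \<P> K clique_induced[OF _ Diff_subset[of V K]] unfolding clique_partition_def by auto
  have "P \<inter> K = {}" if "P \<in> \<P>" for P using that cover by blast
  then show "\<forall>P1\<in>insert K \<P>. \<forall>P2\<in>insert K \<P>. P1 \<noteq> P2 \<longrightarrow> P1 \<inter> P2 = {}"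
    using \<P> unfolding clique_partition_def by (auto simp: Int_commute)
  have "K \<subseteq> V" using K unfolding clique_def by blast
  then show "\<Union>(insert K \<P>) = V" using cover by auto
qed

lemma the_block:
  assumes "\<forall>P1\<in>\<P>. \<forall>P2\<in>\<P>. P1 \<noteq> P2 \<longrightarrow> P1 \<inter> P2 = {}" "P \<in> \<P>" "x \<in> P"
  shows "(THE P. P \<in> \<P> \<and> x \<in> P) = P"
  using assms by (intro the_equality) blast+

lemma blocks_meeting_eq_image:
  assumes disj: "\<forall>P1\<in>\<P>. \<forall>P2\<in>\<P>. P1 \<noteq> P2 \<longrightarrow> P1 \<inter> P2 = {}" and "S \<subseteq> \<Union>\<P>"
  shows "{P\<in>\<P>. P \<inter> S \<noteq> {}} = (\<lambda>x. THE P. P \<in> \<P> \<and> x \<in> P) ` S"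
proof (intro equalityI subsetI)
  fix P assume "P \<in> {P\<in>\<P>. P \<inter> S \<noteq> {}}"
  then obtain x where x: "P \<in> \<P>" "x \<in> P" "x \<in> S" by blast
  then have "P = (THE P. P \<in> \<P> \<and> x \<in> P)" using the_block[OF disj] by simp
  then show "P \<in> (\<lambda>x. THE P. P \<in> \<P> \<and> x \<in> P) ` S" using x(3) by blast
next
  fix P assume "P \<in> (\<lambda>x. THE P. P \<in> \<P> \<and> x \<in> P) ` S"
  then obtain x where x: "x \<in> S" "P = (THE P. P \<in> \<P> \<and> x \<in> P)" by blast
  moreover obtain Q where "Q \<in> \<P>" "x \<in> Q" using x(1) assms(2) by blast
  ultimately show "P \<in> {P\<in>\<P>. P \<inter> S \<noteq> {}}" using the_block[OF disj] by auto
qed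

lemma card_blocks_meeting_le:
  assumes "\<forall>P1\<in>\<P>. \<forall>P2\<in>\<P>. P1 \<noteq> P2 \<longrightarrow> P1 \<inter> P2 = {}" "S \<subseteq> \<Union>\<P>" "finite S"
  shows "card {P\<in>\<P>. P \<inter> S \<noteq> {}} \<le> card S"
  unfolding blocks_meeting_eq_image[OF assms(1,2)] using assms(3) by (rule card_image_le)

lemma card_eq_blocks_meeting:
  assumes "\<forall>P1\<in>\<P>. \<forall>P2\<in>\<P>. P1 \<noteq> P2 \<longrightarrow> P1 \<inter> P2 = {}" "S \<subseteq> \<Union>\<P>"
    and "\<And>P x y. P \<in> \<P> \<Longrightarrow> x \<in> P \<inter> S \<Longrightarrow> y \<in> P \<inter> S \<Longrightarrow> x = y"
  shows "card S = card {P\<in>\<P>. P \<inter> S \<noteq> {}}"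
  unfolding blocks_meeting_eq_image[OF assms(1,2)]
proof (rule card_image[symmetric], rule inj_onI)
  fix x y assume "x \<in> S" "y \<in> S" and eq: "(THE P. P \<in> \<P> \<and> x \<in> P) = (THE P. P \<in> \<P> \<and> y \<in> P)"
  then obtain P Q where "P \<in> \<P>" "x \<in> P" "Q \<in> \<P>" "y \<in> Q" using assms(2) by blast
  moreover from this have "P = Q" using eq the_block[OF assms(1)] by simp
  ultimately show "x = y" using assms(3) \<open>x \<in> S\<close> \<open>y \<in> S\<close> by blast
qed

lemma clique_partition_card_independent:
  assumes "clique_partition V E \<P>" "independent_set V E S"
  shows "card S = card {P\<in>\<P>. P \<inter> S \<noteq> {}}"
proof (rule card_eq_blocks_meeting)
  show "\<forall>P1\<in>\<P>. \<forall>P2\<in>\<P>. P1 \<noteq> P2 \<longrightarrow> P1 \<inter> P2 = {}" "S \<subseteq> \<Union>\<P>"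
    using assms unfolding clique_partition_def independent_set_def by blast+
  fix P x y assume "P \<in> \<P>" "x \<in> P \<inter> S" "y \<in> P \<inter> S"
  then show "x = y"
    using assms unfolding clique_partition_def clique_def independent_set_def by blast
qed

lemma free_vertex_unique_clique:
  assumes "free_vertex V E v" "maximal_clique V E K1" "v \<in> K1" "maximal_clique V E K2" "v \<in> K2"
  shows "K1 = K2"
  using assms unfolding free_vertex_def by (metis (no_types, lifting))

lemma free_vertex_neighbours_in_clique:
  assumes sg: "simple_graph V E" and v: "free_vertex V E v" and K: "maximal_clique V E K" "v \<in> K"
  shows "{u. E v u} \<subseteq> K"
proof
  fix u assume "u \<in> {u. E v u}"
  then have "clique V E {v, u}"
    using simple_graph_edge_in[OF sg] simple_graph_sym[OF sg, of v u]
      simple_graph_irrefl[OF sg, of v]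
    unfolding clique_def by auto
  then obtain K' where K': "maximal_clique V E K'" "{v, u} \<subseteq> K'"
    using clique_extend[OF simple_graph_finite[OF sg]] by blast
  then have "K' = K" using free_vertex_unique_clique[OF v _ _ K] by blast
  then show "u \<in> K" using K'(2) by blast
qed

lemma clique_containing_neighbourhood_maximal:
  assumes K: "clique V E K" "v \<in> K" "{u. E v u} \<subseteq> K"
  shows "maximal_clique V E K"
  unfolding maximal_clique_def
proof (intro conjI allI impI notI)
  show "clique V E K" by fact
  fix K' assume "K \<subset> K'" "clique V E K'"
  then obtain x where "x \<in> K'" "x \<notin> K" "v \<in> K'" using K(2) by blast
  moreover from this have "E v x" using \<open>clique V E K'\<close> K(2) unfolding clique_def by metis
  ultimately show False using K(3) by blast
qed

lemma clique_containing_neighbourhood_free: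
  assumes K: "clique V E K" "v \<in> K" "{u. E v u} \<subseteq> K"
  shows "free_vertex V E v"
  unfolding free_vertex_def
proof (rule conjI)
  show "v \<in> V" using K(1,2) unfolding clique_def by blast
  show "\<exists>!K. maximal_clique V E K \<and> v \<in> K"
  proof (rule ex1I)
    show "maximal_clique V E K \<and> v \<in> K"
      using clique_containing_neighbourhood_maximal[OF K] K(2) by blast
    fix K' assume K': "maximal_clique V E K' \<and> v \<in> K'"
    then have cl: "clique V E K'" and "v \<in> K'" unfolding maximal_clique_def by blast+
    have "K' \<subseteq> K"
    proof
      fix y assume "y \<in> K'"
      show "y \<in> K"
      proof (cases "y = v")
        case True then show ?thesis using K(2) by simp
      next
        case False
        then have "E v y" using cl \<open>v \<in> K'\<close> \<open>y \<in> K'\<close> unfolding clique_def by metis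
        then show ?thesis using K(3) by blast
      qed
    qed
    moreover have "\<not> K' \<subset> K" using K' K(1) unfolding maximal_clique_def by blast
    ultimately show "K' = K" by blast
  qed
qed

definition simplex_partition :: "'a set \<Rightarrow> ('a \<Rightarrow> 'a \<Rightarrow> bool) \<Rightarrow> 'a set set \<Rightarrow> bool" where
  "simplex_partition V E \<K> \<longleftrightarrow> clique_partition V E \<K> \<and> (\<forall>K\<in>\<K>. \<exists>v\<in>K. {u. E v u} \<subseteq> K)"

lemma free_clique_partition_iff_simplex_partition:
  assumes sg: "simple_graph V E"
  shows "(\<forall>K\<in>\<K>. maximal_clique V E K \<and> (\<exists>v\<in>K. free_vertex V E v))
      \<and> (\<forall>K1\<in>\<K>. \<forall>K2\<in>\<K>. K1 \<noteq> K2 \<longrightarrow> K1 \<inter> K2 = {}) \<and> \<Union>\<K> = V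
    \<longleftrightarrow> simplex_partition V E \<K>"
    (is "?free \<and> ?disjoint \<and> ?cover \<longleftrightarrow> _")
proof
  assume "?free \<and> ?disjoint \<and> ?cover"
  then have free: ?free and disjoint: ?disjoint and cover: ?cover by blast+
  show "simplex_partition V E \<K>"
    unfolding simplex_partition_def clique_partition_def
  proof (intro conjI ballI)
    fix K assume "K \<in> \<K>"
    then obtain v where v: "v \<in> K" "free_vertex V E v" and max: "maximal_clique V E K"
      using free by blast
    then show "\<exists>v\<in>K. {u. E v u} \<subseteq> K"
      using free_vertex_neighbours_in_clique[OF sg v(2) max v(1)] by blast
    show "clique V E K" using max unfolding maximal_clique_def by blast
  qed (use disjoint cover in blast)+
next
  assume "simplex_partition V E \<K>"
  then have part: "clique_partition V E \<K>" and simplex: "\<forall>K\<in>\<K>. \<exists>v\<in>K. {u. E v u} \<subseteq> K"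
    unfolding simplex_partition_def by blast+
  have ?free
  proof
    fix K assume "K \<in> \<K>"
    then have "clique V E K" using part unfolding clique_partition_def by blast
    moreover obtain v where "v \<in> K" "{u. E v u} \<subseteq> K" using simplex \<open>K \<in> \<K>\<close> by blast
    ultimately have v: "clique V E K" "v \<in> K" "{u. E v u} \<subseteq> K" by blast+
    then show "maximal_clique V E K \<and> (\<exists>v\<in>K. free_vertex V E v)"
      using clique_containing_neighbourhood_maximal[OF v] clique_containing_neighbourhood_free[OF v]
      by blast
  qed
  then show "?free \<and> ?disjoint \<and> ?cover" using part unfolding clique_partition_def by blast
qed

lemma simplex_partition_meets_dominating:
  assumes "simplex_partition V E \<K>" "dominating_set V E D" "K \<in> \<K>"
  shows "K \<inter> D \<noteq> {}"
proof -
  obtain v where "v \<in> K" "{u. E v u} \<subseteq> K" using assms(1,3) unfolding simplex_partition_def by blast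
  moreover have "v \<in> V"
    using assms(1,3) \<open>v \<in> K\<close> unfolding simplex_partition_def clique_partition_def by blast
  ultimately show ?thesis using assms(2) unfolding dominating_set_def by blast
qed

lemma simplex_partition_card_le_dominating:
  assumes sg: "simple_graph V E" and \<K>: "simplex_partition V E \<K>" and D: "dominating_set V E D"
  shows "card \<K> \<le> card D"
proof -
  have "{K\<in>\<K>. K \<inter> D \<noteq> {}} = \<K>" using simplex_partition_meets_dominating[OF \<K> D] by blast
  moreover have "finite D" "D \<subseteq> \<Union>\<K>"
    using D \<K> finite_subset simple_graph_finite[OF sg]
    unfolding dominating_set_def simplex_partition_def clique_partition_def by auto
  ultimately show ?thesis
    using card_blocks_meeting_le[of \<K> D] \<K> unfolding simplex_partition_def clique_partition_def
    by simp
qed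

lemma simplex_partition_transversal:
  assumes sg: "simple_graph V E" and \<K>: "simplex_partition V E \<K>"
  shows "\<exists>F. independent_set V E F \<and> dominating_set V E F \<and> card F = card \<K>"
proof -
  obtain r where r: "\<And>K. K \<in> \<K> \<Longrightarrow> r K \<in> K" "\<And>K. K \<in> \<K> \<Longrightarrow> {u. E (r K) u} \<subseteq> K"
    using \<K> unfolding simplex_partition_def by metis
  have cliques: "\<And>K. K \<in> \<K> \<Longrightarrow> clique V E K" and cover: "\<Union>\<K> = V"
    and same: "\<And>K1 K2 x. K1 \<in> \<K> \<Longrightarrow> K2 \<in> \<K> \<Longrightarrow> x \<in> K1 \<Longrightarrow> x \<in> K2 \<Longrightarrow> K1 = K2"
    using \<K> unfolding simplex_partition_def clique_partition_def by blast+
  have "r ` \<K> \<subseteq> V" using r(1) cover by blast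
  moreover have "\<not> E (r K1) (r K2)" if "K1 \<in> \<K>" "K2 \<in> \<K>" for K1 K2
  proof
    assume edge: "E (r K1) (r K2)"
    then have "K1 = K2" using same[OF that] r that by blast
    then show False using edge simple_graph_irrefl[OF sg] by simp
  qed
  ultimately have "independent_set V E (r ` \<K>)" unfolding independent_set_def by blast
  moreover have "dominating_set V E (r ` \<K>)"
    unfolding dominating_set_def
  proof (intro conjI ballI)
    show "r ` \<K> \<subseteq> V" by fact
    fix v assume "v \<in> V"
    then obtain K where "K \<in> \<K>" "v \<in> K" using cover by blast
    then show "v \<in> r ` \<K> \<or> (\<exists>u\<in>r ` \<K>. E v u)"
      using cliques r(1) unfolding clique_def by blast
  qed
  moreover have "inj_on r \<K>" using same r(1) by (metis inj_onI)
  ultimately show ?thesis using card_image by blast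
qed

text \<open>Otherwise D - {x} fails to dominate some vertex p \<noteq> x outside D, yet the block of p is a
  clique containing a vertex of D other than x (namely y if that block is P).\<close>
lemma minimal_dominating_set_meets_block_once:
  assumes \<P>: "clique_partition V E \<P>"
    and D: "minimal_dominating_set V E D" and meets: "\<forall>Q\<in>\<P>. Q \<inter> D \<noteq> {}"
    and P: "P \<in> \<P>" "x \<in> P \<inter> D" "y \<in> P \<inter> D"
  shows "x = y"
proof (rule ccontr)
  assume "x \<noteq> y"
  then have y: "y \<in> D - {x}" using P(3) by blast
  have dom: "dominating_set V E D" and "\<not> dominating_set V E (D - {x})"
    using D P(2) unfolding minimal_dominating_set_def by blast+
  moreover have "D - {x} \<subseteq> V" using dom unfolding dominating_set_def by blast
  ultimately obtain p where p: "p \<in> V" "p \<notin> D - {x}" "\<forall>u\<in>D - {x}. \<not> E p u"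
    unfolding dominating_set_def by blast
  have adj: "E a b" if "Q \<in> \<P>" "a \<in> Q" "b \<in> Q" "a \<noteq> b" for Q a b
    using \<P> that unfolding clique_partition_def clique_def by blast
  show False
  proof (cases "p = x")
    case True
    then show False using adj[OF P(1), of x y] P(2,3) \<open>x \<noteq> y\<close> p(3) y by blast
  next
    case False
    then have "p \<notin> D" using p(2) by blast
    obtain Q where Q: "Q \<in> \<P>" "p \<in> Q" using \<P> p(1) unfolding clique_partition_def by blast
    obtain z where z: "z \<in> Q" "z \<in> D" using meets Q(1) by blast
    have "z \<noteq> x \<or> Q = P"
      using \<P> P(1,2) Q(1) z(1) unfolding clique_partition_def by blast
    then have "\<exists>u\<in>D - {x}. u \<in> Q"
      using z y P(3) by blast
    then show False using adj[OF Q(1,2)] \<open>p \<notin> D\<close> p(3) by blast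
  qed
qed

lemma simplex_partition_domination_independence:
  assumes sg: "simple_graph V E" and \<K>: "simplex_partition V E \<K>"
  shows "domination_number V E = card \<K>" "independence_number V E = card \<K>"
    "well_dominated V E"
proof -
  have fin: "finite V" using simple_graph_finite[OF sg] .
  have \<K>_part: "clique_partition V E \<K>" using \<K> unfolding simplex_partition_def by blast
  then have fin_\<K>: "finite \<K>" using clique_partition_finite[OF fin] by blast
  obtain F where F: "independent_set V E F" "dominating_set V E F" "card F = card \<K>"
    using simplex_partition_transversal[OF sg \<K>] by blast
  show "domination_number V E = card \<K>"
    using domination_number_eqI[OF fin F(2)] simplex_partition_card_le_dominating[OF sg \<K>] F(3)
    by simp
  have "card S \<le> card \<K>" if "independent_set V E S" for S
    using clique_partition_card_independent[OF \<K>_part that]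
      card_mono[OF fin_\<K>, of "{K\<in>\<K>. K \<inter> S \<noteq> {}}"] by simp
  then show "independence_number V E = card \<K>"
    using independence_number_eqI[OF fin F(1)] F(3) by simp
  have "card D = card \<K>" if D: "minimal_dominating_set V E D" for D
  proof -
    have dom: "dominating_set V E D" using D unfolding minimal_dominating_set_def by blast
    then have meets: "\<forall>K\<in>\<K>. K \<inter> D \<noteq> {}" using simplex_partition_meets_dominating[OF \<K>] by blast
    have "card D = card {K\<in>\<K>. K \<inter> D \<noteq> {}}"
    proof (rule card_eq_blocks_meeting)
      show "\<forall>P1\<in>\<K>. \<forall>P2\<in>\<K>. P1 \<noteq> P2 \<longrightarrow> P1 \<inter> P2 = {}" "D \<subseteq> \<Union>\<K>"
        using \<K>_part dom unfolding clique_partition_def dominating_set_def by blast+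
      show "\<And>K x y. K \<in> \<K> \<Longrightarrow> x \<in> K \<inter> D \<Longrightarrow> y \<in> K \<inter> D \<Longrightarrow> x = y"
        using minimal_dominating_set_meets_block_once[OF \<K>_part D meets] by blast
    qed
    also have "\<dots> = card \<K>" using meets by (intro arg_cong[where f = card]) blast
    finally show ?thesis .
  qed
  then show "well_dominated V E" unfolding well_dominated_def by simp
qed

section \<open>Chordal graphs\<close>

definition walk :: "('a \<Rightarrow> 'a \<Rightarrow> bool) \<Rightarrow> 'a set \<Rightarrow> 'a \<Rightarrow> 'a \<Rightarrow> 'a list \<Rightarrow> bool" where
  "walk E W a b xs \<longleftrightarrow> xs \<noteq> [] \<and> hd xs = a \<and> last xs = b \<and> set xs \<subseteq> W \<and> successively E xs"

lemma walk_snoc: "walk E W a b xs \<Longrightarrow> c \<in> W \<Longrightarrow> E b c \<Longrightarrow> walk E W a c (xs @ [c])"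
  unfolding walk_def by (auto simp: successively_append_iff)

lemma walk_Cons: "walk E W b c xs \<Longrightarrow> a \<in> W \<Longrightarrow> E a b \<Longrightarrow> walk E W a c (a # xs)"
  unfolding walk_def by (auto simp: successively_Cons)

lemma walk_rev: "symp E \<Longrightarrow> walk E W a b xs \<Longrightarrow> walk E W b a (rev xs)"
  unfolding walk_def by (auto simp: hd_rev last_rev elim: successively_mono dest: sympD)

lemma walk_append: "walk E W a b xs \<Longrightarrow> walk E W b c ys \<Longrightarrow> walk E W a c (xs @ tl ys)"
  unfolding walk_def
  by (cases ys) (auto simp: successively_append_iff successively_Cons)

lemma walk_mono: "walk E W a b xs \<Longrightarrow> W \<subseteq> W' \<Longrightarrow> walk E W' a b xs"
  unfolding walk_def by blast

lemma successively_take_drop: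
  assumes "successively P xs" shows "successively P (take k xs)" "successively P (drop k xs)"
  using assms successively_append_iff[of P "take k xs" "drop k xs"] by simp_all

lemma walk_shortcut:
  assumes "walk E W a b xs" "k \<le> j" "j < length xs"
    and "k = 0 \<and> xs ! j = a \<or> 0 < k \<and> E (xs ! (k - 1)) (xs ! j)"
  shows "walk E W a b (take k xs @ drop j xs)"
  using assms successively_take_drop[of E xs] unfolding walk_def
  by (auto simp: successively_append_iff hd_drop_conv_nth last_conv_nth min_def nth_append
      hd_append dest: in_set_takeD in_set_dropD)

definition induced_path :: "('a \<Rightarrow> 'a \<Rightarrow> bool) \<Rightarrow> 'a list \<Rightarrow> bool" where
  "induced_path E xs \<longleftrightarrow> distinct xs \<and> successively E xs
     \<and> (\<forall>i j. i < j \<longrightarrow> j < length xs \<longrightarrow> E (xs ! i) (xs ! j) \<longrightarrow> j = Suc i)"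

lemma walk_induced_path:
  assumes "walk E W a b xs"
  shows "\<exists>ys. walk E W a b ys \<and> induced_path E ys"
proof -
  obtain ys where ys: "walk E W a b ys"
    and shortest: "\<And>zs. walk E W a b zs \<Longrightarrow> length ys \<le> length zs"
    using ex_has_least_nat[of "walk E W a b" xs length] assms by metis
  have hd_ys: "ys ! 0 = a" and E_ys: "successively E ys"
    using ys by (auto simp: walk_def hd_conv_nth)
  have "distinct ys"
  proof (rule ccontr)
    assume "\<not> distinct ys"
    then obtain i j where ij: "i < j" "j < length ys" "ys ! i = ys ! j"
      unfolding distinct_conv_nth by (metis linorder_neqE_nat)
    have "i = 0 \<and> ys ! j = a \<or> 0 < i \<and> E (ys ! (i - 1)) (ys ! j)"
      using successively_nth[OF E_ys, of "i - 1"] ij hd_ys by (cases i) auto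
    then have "walk E W a b (take i ys @ drop j ys)"
      using walk_shortcut[OF ys] ij by simp
    then show False using shortest ij by fastforce
  qed
  moreover have "j = Suc i" if ij: "i < j" "j < length ys" "E (ys ! i) (ys ! j)" for i j
  proof (rule ccontr)
    assume "j \<noteq> Suc i"
    have "walk E W a b (take (Suc i) ys @ drop j ys)"
      using walk_shortcut[OF ys, of "Suc i" j] ij by simp
    then show False using shortest ij \<open>j \<noteq> Suc i\<close> by fastforce
  qed
  ultimately show ?thesis using ys E_ys unfolding induced_path_def by blast
qed

lemma induced_path_closing_cycle:
  assumes sg: "simple_graph V E"
    and xs: "induced_path E xs" "3 \<le> length xs" "set xs \<subseteq> V"
    and u: "u \<notin> set xs" "E u (hd xs)" "E u (last xs)"
  shows "is_cycle V E (u # xs)"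
  unfolding is_cycle_def
proof (intro conjI allI impI)
  have path: "successively E xs" "distinct xs" using xs(1) unfolding induced_path_def by blast+
  show "3 \<le> length (u # xs)" "distinct (u # xs)" "set (u # xs) \<subseteq> V"
    using xs u path simple_graph_edge_in[OF sg u(2)] by auto
  fix i assume "i < length (u # xs)"
  then consider "i = 0" | "i = length xs" | "0 < i" "i < length xs" by force
  then show "E ((u # xs) ! i) ((u # xs) ! ((i + 1) mod length (u # xs)))"
  proof cases
    case 1
    have "xs \<noteq> []" using xs(2) by auto
    then show ?thesis using 1 u(2) by (simp add: hd_conv_nth)
  next
    case 2
    have "xs \<noteq> []" using xs(2) by auto
    then show ?thesis using 2 u(3) simple_graph_sym[OF sg] by (simp add: last_conv_nth)
  next
    case 3 then show ?thesis
      using successively_nth[OF path(1), of "i - 1"] by (cases i) auto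
  qed
qed

lemma chordal_induced_path_not_closed:
  assumes sg: "simple_graph V E" and ch: "chordal V E"
    and xs: "induced_path E xs" "3 \<le> length xs" "set xs \<subseteq> V"
    and u: "u \<notin> set xs" "E u (hd xs)" "E u (last xs)"
    and interior: "\<And>k. 0 < k \<Longrightarrow> k < length xs - 1 \<Longrightarrow> \<not> E u (xs ! k)"
  shows False
proof -
  define n where "n = length xs"
  have no_chord: "\<And>i j. i < j \<Longrightarrow> j < n \<Longrightarrow> E (xs ! i) (xs ! j) \<Longrightarrow> j = Suc i"
    using xs(1) unfolding induced_path_def n_def by blast
  have "has_chord E (u # xs)"
    using ch induced_path_closing_cycle[OF sg xs u] xs(2) unfolding chordal_def by simp
  then obtain i j where ij: "i < j" "j < Suc n" "j \<noteq> Suc i" "i \<noteq> (j + 1) mod Suc n"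
    "E ((u # xs) ! i) ((u # xs) ! j)"
    unfolding has_chord_def n_def
    by (metis (no_types, lifting) Suc_eq_plus1 length_Cons linorder_neqE_nat mod_less
        simple_graph_sym[OF sg])
  show False
  proof (cases i)
    case 0
    then have "j \<noteq> n" using ij(4) by auto
    then have "0 < j - 1" "j - 1 < n - 1" using ij 0 by auto
    then show False using interior ij 0 by (cases j) (auto simp: n_def)
  next
    case (Suc i')
    then show False using no_chord[of i' "j - 1"] ij by (cases j) auto
  qed
qed

lemma chordal_linked_neighbours_adjacent:
  assumes sg: "simple_graph V E" and ch: "chordal V E"
    and C: "C \<subseteq> V" "u \<notin> C" "\<forall>c\<in>C. \<not> E u c"
    and st: "s \<noteq> t" "E u s" "E u t" "s \<notin> C" "t \<notin> C"
    and walk: "walk E (C \<union> {s, t}) s t xs"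
  shows "E s t"
proof (rule ccontr)
  assume not_st: "\<not> E s t"
  obtain ys where ys: "walk E (C \<union> {s, t}) s t ys" "induced_path E ys"
    using walk_induced_path[OF walk] by blast
  have ne: "ys \<noteq> []" and ys0: "ys ! 0 = s" and ys_last: "ys ! (length ys - 1) = t"
    and set_ys: "set ys \<subseteq> C \<union> {s, t}" and E_ys: "successively E ys" and "distinct ys"
    using ys unfolding walk_def induced_path_def by (auto simp: hd_conv_nth last_conv_nth)
  have "length ys \<noteq> 1" using ys0 ys_last st(1) by auto
  moreover have "length ys \<noteq> 2" using ys0 ys_last not_st successively_nth[OF E_ys, of 0] by auto
  moreover have "length ys \<noteq> 0" using ne by simp
  ultimately have len: "3 \<le> length ys" by linarith
  have "ys ! k \<in> C" if k: "0 < k" "k < length ys - 1" for k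
  proof -
    have idx: "k < length ys" "0 < length ys" "length ys - 1 < length ys"
      "k \<noteq> 0" "k \<noteq> length ys - 1" using k by auto
    then have "ys ! k \<noteq> ys ! 0" "ys ! k \<noteq> ys ! (length ys - 1)"
      using \<open>distinct ys\<close> unfolding distinct_conv_nth by blast+
    moreover have "ys ! k \<in> C \<union> {s, t}" using set_ys nth_mem[OF idx(1)] by blast
    ultimately show ?thesis using ys0 ys_last by auto
  qed
  then have "\<And>k. 0 < k \<Longrightarrow> k < length ys - 1 \<Longrightarrow> \<not> E u (ys ! k)" using C(3) by blast
  moreover have "u \<notin> set ys" using set_ys C(2) st simple_graph_irrefl[OF sg] by auto
  moreover have "set ys \<subseteq> V"
    using set_ys C(1) simple_graph_edge_in[OF sg st(2)] simple_graph_edge_in[OF sg st(3)] by auto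
  ultimately show False
    using chordal_induced_path_not_closed[OF sg ch ys(2) len] ys(1) st(2,3)
    unfolding walk_def by blast
qed

definition reach :: "('a \<Rightarrow> 'a \<Rightarrow> bool) \<Rightarrow> 'a set \<Rightarrow> 'a \<Rightarrow> 'a set" where
  "reach E W a = {b. \<exists>xs. walk E W a b xs}"

lemma reach_subset: "reach E W a \<subseteq> W"
  unfolding reach_def walk_def by auto

lemma self_in_reach: "a \<in> W \<Longrightarrow> a \<in> reach E W a"
  unfolding reach_def walk_def by (auto intro: exI[of _ "[a]"])

lemma reach_closed: "b \<in> reach E W a \<Longrightarrow> c \<in> W \<Longrightarrow> E b c \<Longrightarrow> c \<in> reach E W a"
  unfolding reach_def by (auto intro: walk_snoc)

lemma reach_walk:
  assumes "symp E" "b \<in> reach E W a" "c \<in> reach E W a"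
  shows "\<exists>xs. walk E W b c xs"
proof -
  obtain xs ys where xs: "walk E W a b xs" and ys: "walk E W a c ys"
    using assms(2,3) unfolding reach_def by blast
  have "walk E W b a (rev xs)" using assms(1) xs by (rule walk_rev)
  then show ?thesis using ys by (blast intro: walk_append)
qed

definition simplicial :: "('a \<Rightarrow> 'a \<Rightarrow> bool) \<Rightarrow> 'a \<Rightarrow> bool" where
  "simplicial E v \<longleftrightarrow> (\<forall>a b. E v a \<longrightarrow> E v b \<longrightarrow> a \<noteq> b \<longrightarrow> E a b)"

lemma simplicial_induced: "simplicial (induced H E) z \<Longrightarrow> z \<in> H \<Longrightarrow> {x. E z x} \<subseteq> H \<Longrightarrow> simplicial E z"
  unfolding simplicial_def induced_def by blast

lemma simplicial_closed_neighbourhood_clique: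
  assumes "simple_graph V E" "v \<in> V" "simplicial E v"
  shows "clique V E (insert v {x. E v x})"
  using assms simple_graph_sym[OF assms(1)] simple_graph_edge_in[OF assms(1)]
  unfolding clique_def simplicial_def by blast

text \<open>Two non-adjacent vertices of S, joined by a path through C, would close a chordless cycle
  through u.\<close>
lemma chordal_component_boundary:
  fixes u w :: 'a
  assumes sg: "simple_graph V E" and ch: "chordal V E"
  defines "W \<equiv> {x\<in>V. x \<noteq> u \<and> \<not> E u x}"
  defines "C \<equiv> reach E W w"
  defines "S \<equiv> {s\<in>V - C. \<exists>c\<in>C. E s c}"
  shows "\<forall>s\<in>S. E u s" and "\<forall>s\<in>S. \<forall>t\<in>S. s \<noteq> t \<longrightarrow> E s t"
proof -
  note sym = simple_graph_sym[OF sg]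
  have C_W: "C \<subseteq> W" unfolding C_def by (rule reach_subset)
  show S_u: "\<forall>s\<in>S. E u s"
  proof (intro ballI, rule ccontr)
    fix s assume "s \<in> S" "\<not> E u s"
    then obtain c where c: "c \<in> C" "E s c" and s: "s \<in> V" "s \<notin> C" unfolding S_def by blast
    have "s \<noteq> u" using c C_W unfolding W_def by blast
    then have "s \<in> W" using s \<open>\<not> E u s\<close> unfolding W_def by blast
    then show False using reach_closed[of c E W w s] c s sym unfolding C_def by blast
  qed
  show "\<forall>s\<in>S. \<forall>t\<in>S. s \<noteq> t \<longrightarrow> E s t"
  proof (intro ballI impI)
    fix s t assume st: "s \<in> S" "t \<in> S" "s \<noteq> t"
    obtain cs ct where "cs \<in> C" "E s cs" "ct \<in> C" "E t ct" "s \<notin> C" "t \<notin> C"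
      using st unfolding S_def by blast
    moreover obtain xs where "walk E W cs ct xs"
      using reach_walk[OF simple_graph_symp[OF sg]] \<open>cs \<in> C\<close> \<open>ct \<in> C\<close> unfolding C_def by blast
    then have "walk E (W \<union> {s, t}) cs ct xs" by (rule walk_mono) blast
    ultimately have "walk E (W \<union> {s, t}) s t ((s # xs) @ [t])"
      using sym by (intro walk_snoc walk_Cons) auto
    moreover have "W \<subseteq> V" "u \<notin> W" "\<forall>c\<in>W. \<not> E u c" "s \<notin> W" "t \<notin> W"
      using S_u st unfolding W_def by auto
    ultimately show "E s t"
      using chordal_linked_neighbours_adjacent[OF sg ch] st S_u by blast
  qed
qed

text \<open>Dirac's lemma in a form suited to induction. With C and S as above, a simplicial vertex of
  the smaller graph on C \<union> S that is not adjacent to a vertex x adjacent to all of S - {x} lies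
  in C, and is simplicial in the whole graph since its neighbours lie in C \<union> S.\<close>
lemma chordal_simplicial_nonneighbour:
  "simple_graph V E \<Longrightarrow> chordal V E \<Longrightarrow> u \<in> V \<Longrightarrow> w \<in> V \<Longrightarrow> w \<noteq> u \<Longrightarrow> \<not> E u w
   \<Longrightarrow> \<exists>z\<in>V. z \<noteq> u \<and> \<not> E u z \<and> simplicial E z"
proof (induction "card V" arbitrary: V E u w rule: less_induct)
  case less
  note sg = less.prems(1) and ch = less.prems(2)
  note sym = simple_graph_sym[OF sg]
  define W where "W = {x\<in>V. x \<noteq> u \<and> \<not> E u x}"
  define C where "C = reach E W w"
  define S where "S = {s\<in>V - C. \<exists>c\<in>C. E s c}"
  define H where "H = C \<union> S"
  note boundary =
    chordal_component_boundary[OF sg ch, of u w, folded W_def, folded C_def, folded S_def]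
  have C_W: "C \<subseteq> W" unfolding C_def by (rule reach_subset)
  have w_C: "w \<in> C" unfolding C_def using less.prems by (intro self_in_reach) (auto simp: W_def)
  have C_nbrs: "{x. E c x} \<subseteq> H" if "c \<in> C" for c
    using that simple_graph_edge_in[OF sg] sym unfolding H_def S_def by blast
  have H_V: "H \<subseteq> V" using C_W unfolding H_def S_def W_def by auto
  have "u \<notin> C" using C_W unfolding W_def by blast
  moreover have "u \<notin> S" using boundary(1) simple_graph_irrefl[OF sg, of u] by blast
  ultimately have "u \<notin> H" unfolding H_def by blast
  then have card_H: "card H < card V"
    using H_V less.prems(3) simple_graph_finite[OF sg] by (intro psubset_card_mono) auto
  show ?case
  proof (cases "\<forall>a\<in>H. \<forall>b\<in>H. a \<noteq> b \<longrightarrow> E a b")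
    case True
    then have "simplicial E w" using C_nbrs[OF w_C] unfolding simplicial_def by blast
    then show ?thesis using w_C C_W unfolding W_def by blast
  next
    case False
    then obtain a b where ab: "a \<in> H" "b \<in> H" "a \<noteq> b" "\<not> E a b" by blast
    have "\<exists>x\<in>H. \<exists>y\<in>H. x \<noteq> y \<and> \<not> E x y \<and> (\<forall>s\<in>S. s \<noteq> x \<longrightarrow> E x s)"
    proof (cases "\<forall>s\<in>S. s \<noteq> a \<longrightarrow> E a s")
      case True then show ?thesis using ab by blast
    next
      case False
      then obtain s where s: "s \<in> S" "s \<noteq> a" "\<not> E a s" by blast
      then have "a \<notin> S" using boundary(2) by metis
      then have "a \<in> H" "s \<in> H" using ab(1) s(1) unfolding H_def by blast+
      moreover have "\<forall>t\<in>S. t \<noteq> s \<longrightarrow> E s t" using boundary(2) s(1) by auto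
      moreover have "\<not> E s a" using s(3) sym[of s a] by blast
      ultimately show ?thesis using s(2) by blast
    qed
    then obtain x y where xy: "x \<in> H" "y \<in> H" "x \<noteq> y" "\<not> induced H E x y"
      and x_S: "\<forall>s\<in>S. s \<noteq> x \<longrightarrow> E x s"
      unfolding induced_def by blast
    obtain z where z: "z \<in> H" "z \<noteq> x" "\<not> induced H E x z" "simplicial (induced H E) z"
      using less.hyps[OF card_H simple_graph_induced[OF sg H_V] chordal_induced[OF ch H_V] xy(1,2)]
        xy(3,4) by blast
    then have "z \<in> C" using x_S xy(1) unfolding H_def induced_def by blast
    then show ?thesis
      using simplicial_induced[OF z(4)] z(1) C_nbrs C_W unfolding W_def by blast
  qed
qed

lemma chordal_simplicial_exists:
  assumes sg: "simple_graph V E" and ch: "chordal V E" and "V \<noteq> {}"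
  shows "\<exists>z\<in>V. simplicial E z"
proof (cases "\<exists>u\<in>V. \<exists>w\<in>V. w \<noteq> u \<and> \<not> E u w")
  case True
  then show ?thesis using chordal_simplicial_nonneighbour[OF sg ch] by blast
next
  case False
  obtain z where "z \<in> V" using \<open>V \<noteq> {}\<close> by blast
  moreover have "simplicial E z"
    unfolding simplicial_def using False simple_graph_edge_in[OF sg] by metis
  ultimately show ?thesis by blast
qed

text \<open>Repeatedly remove the closed neighbourhood of a simplicial vertex; the removed simplicial
  vertices are pairwise non-adjacent.\<close>
lemma chordal_clique_partition:
  "simple_graph V E \<Longrightarrow> chordal V E
   \<Longrightarrow> \<exists>\<P> I. clique_partition V E \<P> \<and> independent_set V E I \<and> card I = card \<P>"
proof (induction "card V" arbitrary: V E rule: less_induct)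
  case less
  note sg = less.prems(1) and ch = less.prems(2)
  have fin: "finite V" using simple_graph_finite[OF sg] .
  show ?case
  proof (cases "V = {}")
    case True
    then show ?thesis
      by (intro exI[of _ "{}"]) (simp add: clique_partition_def independent_set_def)
  next
    case False
    obtain v where v: "v \<in> V" "simplicial E v"
      using chordal_simplicial_exists[OF sg ch False] by blast
    define K where "K = insert v {x. E v x}"
    have K: "clique V E K" "v \<in> K" unfolding K_def
      using simplicial_closed_neighbourhood_clique[OF sg v] by auto
    define V' where "V' = V - K"
    have V'_V: "V' \<subseteq> V" unfolding V'_def by blast
    have "card V' < card V" using fin K(2) v(1) unfolding V'_def by (intro psubset_card_mono) auto
    then obtain \<P>' I' where \<P>': "clique_partition V' (induced V' E) \<P>'"
      and I': "independent_set V' (induced V' E) I'" "card I' = card \<P>'"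
      using less.hyps[OF _ simple_graph_induced[OF sg V'_V] chordal_induced[OF ch V'_V]] by blast
    have V'_cover: "\<Union>\<P>' = V'" and I'_V': "I' \<subseteq> V'"
      using \<P>' I'(1) unfolding clique_partition_def independent_set_def by blast+
    have "finite \<P>'" using clique_partition_finite[OF finite_subset[OF V'_V fin] \<P>'] .
    moreover have "K \<notin> \<P>'" using V'_cover K(2) unfolding V'_def by blast
    moreover have "v \<notin> I'" "finite I'"
      using I'_V' K(2) finite_subset[OF _ fin] V'_V unfolding V'_def by auto
    moreover have "clique_partition V E (insert K \<P>')"
      using clique_partition_insert \<P>' K(1) unfolding V'_def by blast
    moreover have "independent_set V E (insert v I')"
    proof (rule independent_set_insert[OF sg independent_set_induced[OF I'(1) V'_V] v(1)])
      show "\<forall>s\<in>I'. \<not> E v s" using I'_V' unfolding V'_def K_def by blast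
    qed
    ultimately show ?thesis using I'(2) by (intro exI) auto
  qed
qed

lemma chordal_clique_neighbourhoods_nested:
  assumes sg: "simple_graph V E" and ch: "chordal V E" and P: "clique V E P"
    and ab: "a \<notin> P" "b \<notin> P" "E a b"
  shows "{p\<in>P. E a p} \<subseteq> {p\<in>P. E b p} \<or> {p\<in>P. E b p} \<subseteq> {p\<in>P. E a p}"
proof (rule ccontr)
  assume "\<not> ?thesis"
  then obtain p q where pq: "p \<in> P" "q \<in> P" "E a p" "\<not> E b p" "E b q" "\<not> E a q" by blast
  note sym = simple_graph_sym[OF sg]
  have "p \<noteq> q" using pq by blast
  then have "E p q" using P pq(1,2) unfolding clique_def by blast
  have "induced_path E [a, b, q]"
    using ab pq simple_graph_irrefl[OF sg, of a]
    unfolding induced_path_def by (auto simp: less_Suc_eq numeral_3_eq_3)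
  moreover have "set [a, b, q] \<subseteq> V" using simple_graph_edge_in[OF sg] ab(3) pq(5) by auto
  moreover have "p \<notin> set [a, b, q]" using ab pq \<open>p \<noteq> q\<close> by auto
  ultimately show False
    using chordal_induced_path_not_closed[OF sg ch, of "[a, b, q]" p] sym pq \<open>E p q\<close>
    by (auto simp: less_Suc_eq)
qed

lemma finite_has_maximal_image:
  fixes f :: "'a \<Rightarrow> 'b::order"
  assumes "finite A" "a \<in> A"
  shows "\<exists>b\<in>A. f a \<le> f b \<and> (\<forall>c\<in>A. f b \<le> f c \<longrightarrow> f b = f c)"
proof -
  obtain m where m: "m \<in> f ` A" "f a \<le> m" "\<forall>n\<in>f ` A. m \<le> n \<longrightarrow> m = n"
    using finite_has_maximal2[OF finite_imageI[OF assms(1)] imageI[OF assms(2)]] by meson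
  then obtain b where "b \<in> A" "m = f b" by blast
  then show ?thesis using m by blast
qed

text \<open>Let A be a maximal independent set among the outside vertices whose neighbourhood in P is
  inclusion-maximal. Adjacent outside vertices have nested neighbourhoods in P, so each vertex of
  that kind not in A has the same neighbourhood in P as its neighbour in A.\<close>
lemma chordal_clique_dominated_from_outside:
  assumes sg: "simple_graph V E" and ch: "chordal V E" and P: "clique V E P"
    and out: "\<forall>p\<in>P. \<exists>a. a \<notin> P \<and> E p a"
  shows "\<exists>A. independent_set V E A \<and> A \<inter> P = {} \<and> (\<forall>p\<in>P. \<exists>a\<in>A. E p a)"
proof -
  note sym = simple_graph_sym[OF sg]
  have fin: "finite V" using simple_graph_finite[OF sg] .
  define N where "N a = {p\<in>P. E a p}" for a
  define M where "M = {a\<in>V - P. \<forall>b\<in>V - P. N a \<subseteq> N b \<longrightarrow> N a = N b}"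
  have M_V: "M \<subseteq> V - P" unfolding M_def by blast
  have up: "\<exists>b\<in>M. N a \<subseteq> N b" if "a \<in> V - P" for a
    using finite_has_maximal_image[of "V - P" a N] fin that unfolding M_def by auto
  have "finite M" using finite_subset[OF M_V] fin by simp
  then obtain A where A: "maximal_independent_set M (induced M E) A"
    using independent_set_extend[of M "induced M E" "{}"] unfolding independent_set_def by blast
  have A_M: "A \<subseteq> M" using A unfolding maximal_independent_set_def independent_set_def by blast
  have A_dom: "b \<in> A \<or> (\<exists>a\<in>A. E b a)" if "b \<in> M" for b
    using maximal_independent_set_dominating[OF simple_graph_induced[OF sg] A] M_V that
    unfolding dominating_set_def induced_def by blast
  have "\<exists>a\<in>A. E p a" if p: "p \<in> P" for p
  proof -
    obtain a where a: "a \<notin> P" "E p a" using out p by blast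
    then have "a \<in> V - P" "p \<in> N a"
      using simple_graph_edge_in[OF sg a(2)] sym[OF a(2)] p unfolding N_def by auto
    then obtain b where b: "b \<in> M" "p \<in> N b" using up by blast
    show ?thesis
    proof (cases "b \<in> A")
      case True then show ?thesis using b(2) sym[of b p] unfolding N_def by blast
    next
      case False
      then obtain a' where a': "a' \<in> A" "E b a'" using A_dom b(1) by blast
      then have "N b \<subseteq> N a' \<or> N a' \<subseteq> N b"
        using chordal_clique_neighbourhoods_nested[OF sg ch P] b(1) A_M M_V unfolding N_def by blast
      then have "N a' = N b" using b(1) a'(1) A_M M_V unfolding M_def by blast
      then show ?thesis using a'(1) b(2) sym[of a' p] unfolding N_def by blast
    qed
  qed
  moreover have "independent_set V E A"
    using independent_set_induced[of M E A V] A M_V unfolding maximal_independent_set_def by blast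
  ultimately show ?thesis using A_M M_V by blast
qed

lemma well_covered_chordal_simplex_partition:
  assumes sg: "simple_graph V E" and ch: "chordal V E" and wc: "well_covered V E"
  shows "\<exists>\<K>. simplex_partition V E \<K>"
proof -
  have fin: "finite V" using simple_graph_finite[OF sg] .
  obtain \<P> I where \<P>: "clique_partition V E \<P>" and I: "independent_set V E I" "card I = card \<P>"
    using chordal_clique_partition[OF sg ch] by blast
  have fin_\<P>: "finite \<P>" using clique_partition_finite[OF fin \<P>] .
  obtain S where S: "maximal_independent_set V E S" "I \<subseteq> S"
    using independent_set_extend[OF fin I(1)] by blast
  have "S \<subseteq> V" using S(1) unfolding maximal_independent_set_def independent_set_def by blast
  then have "card \<P> \<le> card S" using I(2) card_mono[OF finite_subset[OF _ fin] S(2)] by simp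
  have "\<exists>v\<in>P. {u. E v u} \<subseteq> P" if P: "P \<in> \<P>" for P
  proof (rule ccontr)
    assume "\<not> (\<exists>v\<in>P. {u. E v u} \<subseteq> P)"
    then have "\<forall>p\<in>P. \<exists>a. a \<notin> P \<and> E p a" unfolding subset_iff by blast
    moreover have "clique V E P" using \<P> P unfolding clique_partition_def by blast
    ultimately obtain A where A: "independent_set V E A" "\<forall>p\<in>P. \<exists>a\<in>A. E p a"
      using chordal_clique_dominated_from_outside[OF sg ch] by blast
    obtain J where J: "maximal_independent_set V E J" "A \<subseteq> J"
      using independent_set_extend[OF fin A(1)] by blast
    then have J_indep: "independent_set V E J" unfolding maximal_independent_set_def by blast
    then have "J \<inter> P = {}" using A(2) J(2) unfolding independent_set_def by blast
    have "card J = card {Q\<in>\<P>. Q \<inter> J \<noteq> {}}"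
      using clique_partition_card_independent[OF \<P> J_indep] .
    also have "\<dots> \<le> card (\<P> - {P})"
      using fin_\<P> \<open>J \<inter> P = {}\<close> by (intro card_mono) auto
    also have "\<dots> < card \<P>" using card_Diff1_less[OF fin_\<P> P] .
    finally have "card J < card S" using \<open>card \<P> \<le> card S\<close> by linarith
    moreover have "card J = card S" using wc J(1) S(1) unfolding well_covered_def by blast
    ultimately show False by simp
  qed
  then show ?thesis using \<P> unfolding simplex_partition_def by blast
qed

theorem corollary4p8:
  fixes V :: "'a set" and E :: "'a \<Rightarrow> 'a \<Rightarrow> bool"
  assumes "simple_graph V E" and "chordal V E"
  shows "(domination_number V E = independence_number V E \<longleftrightarrow> well_covered V E)
       \<and> (well_covered V E \<longleftrightarrow> well_dominated V E)
       \<and> (well_dominated V E \<longleftrightarrow>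
            (\<exists>\<K>. (\<forall>K\<in>\<K>. maximal_clique V E K \<and> (\<exists>v\<in>K. free_vertex V E v))
                 \<and> (\<forall>K1\<in>\<K>. \<forall>K2\<in>\<K>. K1 \<noteq> K2 \<longrightarrow> K1 \<inter> K2 = {})
                 \<and> \<Union>\<K> = V))"
proof -
  note sg = assms(1)
  have "domination_number V E = independence_number V E \<Longrightarrow> well_covered V E"
    and "well_dominated V E \<Longrightarrow> well_covered V E"
    by (fact domination_eq_independence_imp_well_covered[OF sg]
        well_dominated_imp_well_covered[OF sg])+
  moreover have "well_covered V E \<Longrightarrow> \<exists>\<K>. simplex_partition V E \<K>"
    using well_covered_chordal_simplex_partition[OF sg assms(2)] .
  moreover have "domination_number V E = independence_number V E \<and> well_dominated V E"
    if "simplex_partition V E \<K>" for \<K>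
    using simplex_partition_domination_independence[OF sg that] by simp
  ultimately show ?thesis
    unfolding free_clique_partition_iff_simplex_partition[OF sg] by blast
qed

end
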